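(* Let $(\mathcal{X},\mathsf{dist})$ be a metric space with $\mathcal{X}=\mathcal{X}^{(0)}\cup\mathcal{X}^{(1)}$ a disjoint union of two classes, where every sample in $\mathcal{X}^{(i)}$ has label $i$, and let $\mathcal{X}_{\text{train}}\subset\mathcal{X}$ be a training set with $\mathcal{X}_{\text{train}}^{(i)}=\mathcal{X}_{\text{train}}\cap\mathcal{X}^{(i)}$. Let $R>0$ and consider the 1-nearest-neighbor classifier $f_{\text{1-nn}}$ with radius $R$. If the data distribution is $R$-aligned, then $f_{\text{1-nn}}$ has accuracy $1$ on it, i.e. $F_{\text{1-nn}}(x)=y$ for every sample $x$ of the distribution with true label $y$.
   Context: For $x\in\mathcal{X}$ define $\mathsf{dist}(x,\mathcal{X}_{\text{train}}^{(i)})=\min_{x_{\text{ref}}\in\mathcal{X}_{\text{train}}^{(i)}\setminus\{x\}}\mathsf{dist}(x,x_{\text{ref}})$. The 1-nearest-neighbor binary classifier with radius $R$ is $f_{\text{1-nn}}(x)=\frac{1}{2R}\big(\mathsf{dist}(x,\mathcal{X}_{\text{train}}^{(0)}),\mathsf{dist}(x,\mathcal{X}_{\text{train}}^{(1)})\big)$, with predicted class $F_{\text{1-nn}}(x)=\arg\min_i f_{\text{1-nn}}^{(i)}(x)$, where $f^{(i)}_{\text{1-nn}}$ is the $i$-th coordinate. For $r>0$, the distribution over $\mathcal{X}^{(0)}\cup\mathcal{X}^{(1)}$ is $r$-separated if $\mathsf{dist}(\mathcal{X}^{(i)},\mathcal{X}^{(j)})\ge 2r$ for all $i\ne j$, where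 $\mathsf{dist}(\mathcal{X}^{(i)},\mathcal{X}^{(j)})=\min_{x\in\mathcal{X}^{(i)},x'\in\mathcal{X}^{(j)}}\mathsf{dist}(x,x')$. It is $R$-clustered if $\max_{x'\in\mathcal{X}^{(i)}\setminus\{x\}}\mathsf{dist}(x,x')\le 2R$ for all $x\in\mathcal{X}^{(i)}$ and all $i$. It is $R$-aligned if it is $r$-separated and $R$-clustered for some $r>R$. Accuracy is the probability over the data distribution that the predicted class equals the true label. *)

theory Defs
  imports "HOL-Analysis.Analysis" "HOL-Library.Extended_Real"
begin

text \<open>Classes are indexed by labels i in {0,1}; Xc i is the class X^(i).\<close>

definition dist_to_set :: "'a::metric_space \<Rightarrow> 'a set \<Rightarrow> ereal" where
  "dist_to_set x S = (INF z\<in>S - {x}. ereal (dist x z))"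

definition f_1nn :: "real \<Rightarrow> (nat \<Rightarrow> 'a::metric_space set) \<Rightarrow> 'a set \<Rightarrow> 'a \<Rightarrow> nat \<Rightarrow> ereal" where
  "f_1nn R Xc Xtrain x i = dist_to_set x (Xtrain \<inter> Xc i) / ereal (2 * R)"

text \<open>The set of argmin classes; the predicted class is well defined and equal
  to y exactly when this set is {y}.\<close>
definition F_1nn :: "real \<Rightarrow> (nat \<Rightarrow> 'a::metric_space set) \<Rightarrow> 'a set \<Rightarrow> 'a \<Rightarrow> nat set" where
  "F_1nn R Xc Xtrain x = {i\<in>{0,1}. \<forall>j\<in>{0,1}. f_1nn R Xc Xtrain x i \<le> f_1nn R Xc Xtrain x j}"

definition r_separated :: "real \<Rightarrow> (nat \<Rightarrow> 'a::metric_space set) \<Rightarrow> bool" where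
  "r_separated r Xc = (\<forall>i\<in>{0,1::nat}. \<forall>j\<in>{0,1}. i \<noteq> j \<longrightarrow>
      (\<forall>x\<in>Xc i. \<forall>x'\<in>Xc j. dist x x' \<ge> 2 * r))"

definition R_clustered :: "real \<Rightarrow> (nat \<Rightarrow> 'a::metric_space set) \<Rightarrow> bool" where
  "R_clustered R Xc = (\<forall>i\<in>{0,1::nat}. \<forall>x\<in>Xc i. \<forall>x'\<in>Xc i - {x}. dist x x' \<le> 2 * R)"

definition R_aligned :: "real \<Rightarrow> (nat \<Rightarrow> 'a::metric_space set) \<Rightarrow> bool" where
  "R_aligned R Xc = (\<exists>r>R. r_separated r Xc \<and> R_clustered R Xc)"

end

theory Submission
  imports Defs
begin

text \<open>A sample of class y has a training neighbour of its own class within distance 2R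
  (clustering), while every training sample of the other class lies at distance at least
  2r > 2R (separation). Hence the own-class coordinate of the classifier is strictly smaller
  than the other one, and y is the unique argmin.\<close>

lemma ereal_divide_less_divide_gap:
  fixes a b :: ereal
  assumes "a \<le> ereal u" "u < v" "ereal v \<le> b" "c > 0"
  shows "a / ereal c < b / ereal c"
proof -
  have "a / ereal c \<le> ereal u / ereal c"
    using assms by (intro ereal_divide_right_mono) auto
  also have "\<dots> = ereal (u / c)" using assms by simp
  also have "\<dots> < ereal (v / c)" using assms by (simp add: divide_strict_right_mono)
  also have "\<dots> = ereal v / ereal c" using assms by simp
  also have "\<dots> \<le> b / ereal c" using assms by (intro ereal_divide_right_mono) auto
  finally show ?thesis .
qed

lemma dist_to_set_le:
  assumes "z \<in> S - {x}" "dist x z \<le> d"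
  shows "dist_to_set x S \<le> ereal d"
proof -
  have "dist_to_set x S \<le> ereal (dist x z)"
    unfolding dist_to_set_def using assms(1) by (rule INF_lower)
  also have "\<dots> \<le> ereal d" using assms(2) by simp
  finally show ?thesis .
qed

lemma dist_to_set_ge:
  assumes "\<And>z. z \<in> S - {x} \<Longrightarrow> d \<le> dist x z"
  shows "ereal d \<le> dist_to_set x S"
  unfolding dist_to_set_def by (rule INF_greatest) (simp add: assms)

lemma F_1nn_eq_singleton:
  assumes "y \<in> {0,1}" "f_1nn R Xc Xtrain x y < f_1nn R Xc Xtrain x (1 - y)"
  shows "F_1nn R Xc Xtrain x = {y}"
  using assms unfolding F_1nn_def by auto

lemma f_1nn_own_class_less:
  assumes "y \<in> {0,1}" "x \<in> Xc y" "Xtrain \<inter> Xc y - {x} \<noteq> {}"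
    and "R > 0" "r > R" "r_separated r Xc" "R_clustered R Xc"
  shows "f_1nn R Xc Xtrain x y < f_1nn R Xc Xtrain x (1 - y)"
proof -
  obtain z where z: "z \<in> Xtrain \<inter> Xc y - {x}" using assms(3) by blast
  have "dist x z \<le> 2 * R"
    using assms(1,2,7) z unfolding R_clustered_def by blast
  then have own: "dist_to_set x (Xtrain \<inter> Xc y) \<le> ereal (2 * R)"
    using z by (rule dist_to_set_le[rotated])
  have other: "ereal (2 * r) \<le> dist_to_set x (Xtrain \<inter> Xc (1 - y))"
  proof (rule dist_to_set_ge)
    fix w assume "w \<in> Xtrain \<inter> Xc (1 - y) - {x}"
    then show "2 * r \<le> dist x w"
      using assms(1,2,6) unfolding r_separated_def by auto
  qed
  show ?thesis
    unfolding f_1nn_def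
    by (rule ereal_divide_less_divide_gap[OF own _ other]) (use assms(4,5) in auto)
qed

theorem lemma3p4:
  fixes Xc :: "nat \<Rightarrow> 'a::metric_space set" and Xtrain :: "'a set" and R :: real
  assumes "Xc 0 \<inter> Xc 1 = {}"
    and "finite Xtrain"
    and "Xtrain \<subseteq> Xc 0 \<union> Xc 1"
    and "\<forall>i\<in>{0,1}. \<forall>x\<in>Xc i. Xtrain \<inter> Xc i - {x} \<noteq> {}"
    and "R > 0"
    and "R_aligned R Xc"
  shows "\<forall>y\<in>{0,1}. \<forall>x\<in>Xc y. F_1nn R Xc Xtrain x = {y}"
proof (intro ballI)
  fix y :: nat and x assume y: "y \<in> {0,1}" and x: "x \<in> Xc y"
  obtain r where "r > R" "r_separated r Xc" "R_clustered R Xc"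
    using assms(6) unfolding R_aligned_def by blast
  with y x assms(4,5) have "f_1nn R Xc Xtrain x y < f_1nn R Xc Xtrain x (1 - y)"
    by (intro f_1nn_own_class_less) auto
  with y show "F_1nn R Xc Xtrain x = {y}"
    by (rule F_1nn_eq_singleton)
qed

end
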